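(* Let $n\ge1$, $s_1\ge1$, let $P$ be any distribution on $[n]$ and let $U_n$ be the uniform distribution on $[n]$. For a multiset $\mathcal S$ of $s_1$ i.i.d. samples, let $S$ be the set of distinct elements of $\mathcal S$ and $U_n(S)=|S|/n$. Then for every $t\in\mathbb R$, $$\Pr_{\mathcal S\sim P^{\otimes s_1}}\big[U_n(S)\ge t\big]\le \Pr_{\mathcal S\sim U_n^{\otimes s_1}}\big[U_n(S)\ge t\big].$$
   Context: $P^{\otimes s_1}$ denotes drawing $s_1$ independent samples from $P$. *)

theory Defs
  imports "HOL-Probability.Probability"
begin

text \<open>Distribution of s i.i.d. samples from P: functions {..<s} \<Rightarrow> elements
  (outside the index set the value is the fixed default "undefined").\<close>
definition iid_samples :: "nat \<Rightarrow> 'a pmf \<Rightarrow> (nat \<Rightarrow> 'a) pmf" where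
  "iid_samples s P = Pi_pmf {..<s} undefined (\<lambda>_. P)"

definition unif_mass_of_support :: "nat \<Rightarrow> nat \<Rightarrow> (nat \<Rightarrow> nat) \<Rightarrow> real" where
  "unif_mass_of_support n s f = real (card (f ` {..<s})) / real n"

end

theory Submission
  imports Defs
begin

text \<open>
  Draw s samples i.i.d. from weights p on a finite set A, and let Q be nondecreasing. The
  expectation of Q(number of distinct samples) does not decrease when mass moves between two
  points i and j so that p i and p j get closer. To see this, merge j into i and then recolour
  each sample landing on the merged point as i or j. If m samples land there, averaging over the
  recolourings gives R 2 (p i + p j)^m - (R 2 - R 1)(p i^m + p j^m), where R 1 and R 2 are the
  values of Q with one or two extra distinct samples. Here p i + p j is fixed, and
  p i^m + p j^m shrinks as the pair becomes less spread. Finitely many such transfers, each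
  putting one more weight at the mean, turn p into the uniform distribution. The theorem is the
  case where Q is the indicator of [t n, \<infinity>).
\<close>

lemma power_add_power_le_of_less_spread:
  fixes x y x' y' :: real
  assumes "0 \<le> x" "x \<le> x'" "x' \<le> y" "x' + y' = x + y"
  shows "x' ^ m + y' ^ m \<le> x ^ m + y ^ m"
proof -
  have "(\<Sum>i<m. x ^ (m - Suc i) * x' ^ i) \<le> (\<Sum>i<m. y' ^ (m - Suc i) * y ^ i)"
    by (intro sum_mono mult_mono power_mono) (use assms in auto)
  moreover have "y - y' = x' - x" "0 \<le> x' - x"
    using assms by simp_all
  ultimately have "(x' - x) * (\<Sum>i<m. x ^ (m - Suc i) * x' ^ i)
      \<le> (y - y') * (\<Sum>i<m. y' ^ (m - Suc i) * y ^ i)"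
    by (simp add: mult_left_mono)
  then have "x' ^ m - x ^ m \<le> y ^ m - y' ^ m"
    by (simp only: power_diff_sumr2)
  then show ?thesis by simp
qed

lemma power_add_power_le_of_between:
  fixes x y x' y' :: real
  assumes "0 \<le> x" "0 \<le> y" "min x y \<le> x'" "x' \<le> max x y" "x' + y' = x + y"
  shows "x' ^ m + y' ^ m \<le> x ^ m + y ^ m"
proof (cases "x \<le> y")
  case True
  then show ?thesis
    using power_add_power_le_of_less_spread[of x x' y y' m] assms by auto
next
  case False
  then show ?thesis
    using power_add_power_le_of_less_spread[of y x' x y' m] assms by auto
qed

text \<open>T is the set of points of M given the second colour; R receives the number of colours used.\<close>

definition two_colour_sum :: "'a set \<Rightarrow> real \<Rightarrow> real \<Rightarrow> (nat \<Rightarrow> real) \<Rightarrow> real" where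
  "two_colour_sum M x y R =
     (\<Sum>T\<in>Pow M. x ^ card (M - T) * y ^ card T * R (of_bool (M - T \<noteq> {}) + of_bool (T \<noteq> {})))"

lemma two_colour_sum_eq:
  assumes "finite M" "M \<noteq> {}"
  shows "two_colour_sum M x y R = R 2 * (x + y) ^ card M - (R 2 - R 1) * (x ^ card M + y ^ card M)"
proof -
  have binomial: "(x + y) ^ card M = (\<Sum>T\<in>Pow M. x ^ card (M - T) * y ^ card T)"
    using prod_add[OF \<open>finite M\<close>, of "\<lambda>_. y" "\<lambda>_. x"] by (simp add: add.commute mult.commute)
  have colours_used:
    "R (of_bool (M - T \<noteq> {}) + of_bool (T \<noteq> {})) = R 2 - (R 2 - R 1) * of_bool (T \<in> {{}, M})"
    if "T \<subseteq> M" for T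
    using that \<open>M \<noteq> {}\<close>
    by (cases "T = {}"; cases "T = M")
      (auto simp: Diff_eq_empty_iff numeral_2_eq_2 dest: subset_antisym)
  have "(\<Sum>T\<in>Pow M. x ^ card (M - T) * y ^ card T * of_bool (T \<in> {{}, M}))
      = (\<Sum>T\<in>{{}, M}. x ^ card (M - T) * y ^ card T)"
    by (rule sum.mono_neutral_cong_right) (use \<open>finite M\<close> in auto)
  also have "\<dots> = x ^ card M + y ^ card M"
    using \<open>M \<noteq> {}\<close> by simp
  finally have one_colour: "(\<Sum>T\<in>Pow M. x ^ card (M - T) * y ^ card T * of_bool (T \<in> {{}, M}))
      = x ^ card M + y ^ card M" .
  have "two_colour_sum M x y R = (\<Sum>T\<in>Pow M. R 2 * (x ^ card (M - T) * y ^ card T)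
      - (R 2 - R 1) * (x ^ card (M - T) * y ^ card T * of_bool (T \<in> {{}, M})))"
    unfolding two_colour_sum_def
    by (rule sum.cong[OF refl], subst colours_used) (auto simp: algebra_simps)
  also have "\<dots> = R 2 * (x + y) ^ card M - (R 2 - R 1) * (x ^ card M + y ^ card M)"
    by (simp only: sum_subtractf sum_distrib_left[symmetric] binomial one_colour)
  finally show ?thesis .
qed

lemma two_colour_sum_mono:
  assumes "finite M" "R 1 \<le> R 2"
    and "0 \<le> x" "0 \<le> y" "min x y \<le> x'" "x' \<le> max x y" "x' + y' = x + y"
  shows "two_colour_sum M x y R \<le> two_colour_sum M x' y' R"
proof (cases "M = {}")
  case False
  show ?thesis
    unfolding two_colour_sum_eq[OF \<open>finite M\<close> False]
    using power_add_power_le_of_between[OF assms(3-7), of "card M"] assms(2,7)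
    by (simp add: mult_left_mono)
qed (simp add: two_colour_sum_def)

definition expect_card_image :: "'i set \<Rightarrow> 'a set \<Rightarrow> ('a \<Rightarrow> real) \<Rightarrow> (nat \<Rightarrow> real) \<Rightarrow> real" where
  "expect_card_image I A p Q = (\<Sum>f\<in>PiE I (\<lambda>_. A). (\<Prod>l\<in>I. p (f l)) * Q (card (f ` I)))"

lemma expect_card_image_cong:
  assumes "\<And>a. a \<in> A \<Longrightarrow> p a = q a"
  shows "expect_card_image I A p Q = expect_card_image I A q Q"
  unfolding expect_card_image_def using assms
  by (intro sum.cong refl arg_cong2[where f = "(*)"] prod.cong) auto

lemma recolour_prod_and_card_image:
  fixes g :: "'i \<Rightarrow> 'a" and q :: "'a \<Rightarrow> real"
  assumes "finite I" "i \<noteq> j" "\<And>l. l \<in> I \<Longrightarrow> g l \<noteq> j" "T \<subseteq> I \<inter> g -` {i}"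
  defines "h \<equiv> \<lambda>l. if l \<in> T then j else g l"
  shows "(\<Prod>l\<in>I. q (h l))
           = (\<Prod>l\<in>I - g -` {i}. q (g l)) * (q i ^ card (I \<inter> g -` {i} - T) * q j ^ card T)"
    and "card (h ` I)
           = card (g ` (I - g -` {i})) + (of_bool (I \<inter> g -` {i} - T \<noteq> {}) + of_bool (T \<noteq> {}))"
proof -
  define M where "M = I \<inter> g -` {i}"
  have "finite M" "finite T" "M \<subseteq> I" "T \<subseteq> M"
    using assms(1,4) by (auto simp: M_def intro: finite_subset)
  have IM: "I - g -` {i} = I - M"
    by (auto simp: M_def)
  have "(\<Prod>l\<in>I. q (h l)) = (\<Prod>l\<in>I - M. q (h l)) * ((\<Prod>l\<in>M - T. q (h l)) * (\<Prod>l\<in>T. q (h l)))"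
    using \<open>finite M\<close> \<open>M \<subseteq> I\<close> \<open>T \<subseteq> M\<close> assms(1)
    by (simp add: prod.subset_diff[of M I] prod.subset_diff[of T M])
  also have "(\<Prod>l\<in>I - M. q (h l)) = (\<Prod>l\<in>I - M. q (g l))"
    using \<open>T \<subseteq> M\<close> by (intro prod.cong) (auto simp: h_def)
  also have "(\<Prod>l\<in>M - T. q (h l)) = q i ^ card (M - T)"
    by (simp add: h_def M_def)
  also have "(\<Prod>l\<in>T. q (h l)) = q j ^ card T"
    by (simp add: h_def)
  finally show "(\<Prod>l\<in>I. q (h l))
      = (\<Prod>l\<in>I - g -` {i}. q (g l)) * (q i ^ card (I \<inter> g -` {i} - T) * q j ^ card T)"
    unfolding M_def[symmetric] IM .
  define C where "C = (if M - T \<noteq> {} then {i} else {}) \<union> (if T \<noteq> {} then {j} else {})"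
  have "h ` I = g ` (I - M) \<union> C"
    using \<open>M \<subseteq> I\<close> \<open>T \<subseteq> M\<close> by (auto simp: h_def M_def C_def image_iff)
  moreover have "g ` (I - M) \<inter> C = {}"
    using assms(3) by (auto simp: M_def C_def)
  ultimately show "card (h ` I)
      = card (g ` (I - g -` {i})) + (of_bool (I \<inter> g -` {i} - T \<noteq> {}) + of_bool (T \<noteq> {}))"
    unfolding M_def[symmetric] IM using assms(1,2) by (simp add: card_Un_disjoint C_def)
qed

lemma expect_card_image_split:
  fixes I :: "'i set" and A :: "'a set"
  assumes "finite I" "finite A" "i \<in> A" "j \<in> A" "i \<noteq> j"
  shows "expect_card_image I A q Q =
    (\<Sum>g\<in>PiE I (\<lambda>_. A - {j}). (\<Prod>l\<in>I - g -` {i}. q (g l)) *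
       two_colour_sum (I \<inter> g -` {i}) (q i) (q j) (\<lambda>k. Q (card (g ` (I - g -` {i})) + k)))"
    (is "_ = sum ?term _")
proof -
  define G where "G = PiE I (\<lambda>_. A - {j})"
  define recolour where "recolour = (\<lambda>(g :: 'i \<Rightarrow> 'a, T). \<lambda>l. if l \<in> T then j else g l)"
  define merge where
    "merge = (\<lambda>f :: 'i \<Rightarrow> 'a. ((\<lambda>l. if l \<in> I \<and> f l = j then i else f l), I \<inter> f -` {j}))"
  define \<phi> where "\<phi> = (\<lambda>f :: 'i \<Rightarrow> 'a. (\<Prod>l\<in>I. q (f l)) * Q (card (f ` I)))"
  have "expect_card_image I A q Q = (\<Sum>gT\<in>Sigma G (\<lambda>g. Pow (I \<inter> g -` {i})). \<phi> (recolour gT))"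
    unfolding expect_card_image_def \<phi>_def[symmetric]
  proof (rule sum.reindex_bij_witness[symmetric, where i = merge and j = recolour])
    fix gT assume "gT \<in> Sigma G (\<lambda>g. Pow (I \<inter> g -` {i}))"
    then obtain g T where "gT = (g, T)" "g \<in> G" "T \<subseteq> I \<inter> g -` {i}"
      by auto
    then show "merge (recolour gT) = gT" "recolour gT \<in> PiE I (\<lambda>_. A)"
      using assms(3-5)
      by (auto simp: G_def merge_def recolour_def fun_eq_iff PiE_iff extensional_def split: if_splits)
  next
    fix f assume "f \<in> PiE I (\<lambda>_. A)"
    then show "recolour (merge f) = f" "merge f \<in> Sigma G (\<lambda>g. Pow (I \<inter> g -` {i}))"
      using assms(3-5)
      by (auto simp: G_def merge_def recolour_def fun_eq_iff PiE_iff extensional_def)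
  qed simp
  also have "\<dots> = (\<Sum>g\<in>G. \<Sum>T\<in>Pow (I \<inter> g -` {i}). \<phi> (recolour (g, T)))"
    using assms(1,2) by (subst sum.Sigma) (auto simp: G_def finite_PiE)
  also have "\<dots> = sum ?term G"
  proof (intro sum.cong refl)
    fix g assume "g \<in> G"
    then have g_avoids_j: "\<And>l. l \<in> I \<Longrightarrow> g l \<noteq> j"
      by (auto simp: G_def)
    show "(\<Sum>T\<in>Pow (I \<inter> g -` {i}). \<phi> (recolour (g, T))) = ?term g"
      unfolding two_colour_sum_def sum_distrib_left \<phi>_def recolour_def prod.case
      using recolour_prod_and_card_image[where g = g, OF assms(1,5) g_avoids_j]
      by (intro sum.cong refl) (simp only: Pow_iff mult.assoc)
  qed
  finally show ?thesis
    unfolding G_def .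
qed

lemma expect_card_image_transfer_mono:
  assumes "finite I" "finite A" "i \<in> A" "j \<in> A" "i \<noteq> j"
    and "\<And>a. a \<in> A \<Longrightarrow> 0 \<le> p a" "mono Q"
    and "min (p i) (p j) \<le> x'" "x' \<le> max (p i) (p j)" "x' + y' = p i + p j"
  shows "expect_card_image I A p Q \<le> expect_card_image I A (p(i := x', j := y')) Q"
  unfolding expect_card_image_split[OF assms(1-5)]
proof (rule sum_mono)
  fix g assume g: "g \<in> PiE I (\<lambda>_. A - {j})"
  let ?p' = "p(i := x', j := y')" and ?M = "I \<inter> g -` {i}"
  let ?R = "\<lambda>k. Q (card (g ` (I - g -` {i})) + k)"
  have "(\<Prod>l\<in>I - g -` {i}. ?p' (g l)) = (\<Prod>l\<in>I - g -` {i}. p (g l))"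
    using g by (intro prod.cong) auto
  moreover have "0 \<le> (\<Prod>l\<in>I - g -` {i}. p (g l))"
    using g assms(6) by (intro prod_nonneg) auto
  moreover have "two_colour_sum ?M (p i) (p j) ?R \<le> two_colour_sum ?M x' y' ?R"
    by (rule two_colour_sum_mono) (use assms in \<open>auto intro: monoD\<close>)
  ultimately show "(\<Prod>l\<in>I - g -` {i}. p (g l)) * two_colour_sum ?M (p i) (p j) ?R
      \<le> (\<Prod>l\<in>I - g -` {i}. ?p' (g l)) * two_colour_sum ?M (?p' i) (?p' j) ?R"
    using assms(5) by (simp add: mult_left_mono)
qed

lemma sum_transfer_eq:
  fixes p :: "'a \<Rightarrow> 'b::ab_group_add"
  assumes "finite A" "i \<in> A" "j \<in> A" "i \<noteq> j"
  shows "sum (p(i := p i - d, j := p j + d)) A = sum p A"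
proof -
  have A: "A = insert i (insert j (A - {i, j}))"
    using assms(2,3) by auto
  have "sum (p(i := p i - d, j := p j + d)) (A - {i, j}) = sum p (A - {i, j})"
    by (rule sum.cong) auto
  then show ?thesis
    using assms by (subst (1 2) A) simp
qed

lemma exists_above_and_below_mean:
  fixes p :: "'a \<Rightarrow> real" and u :: real
  assumes "finite A" "sum p A = card A * u" "a \<in> A" "p a \<noteq> u"
  obtains i j where "i \<in> A" "j \<in> A" "u < p i" "p j < u"
proof -
  have "\<not> (\<forall>b\<in>A. p b \<le> u)"
  proof
    assume "\<forall>b\<in>A. p b \<le> u"
    then have "sum p A < sum (\<lambda>_. u) A"
      using assms by (intro sum_strict_mono_ex1) force+
    with assms(2) show False by simp
  qed
  moreover have "\<not> (\<forall>b\<in>A. u \<le> p b)"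
  proof
    assume "\<forall>b\<in>A. u \<le> p b"
    then have "sum (\<lambda>_. u) A < sum p A"
      using assms by (intro sum_strict_mono_ex1) force+
    with assms(2) show False by simp
  qed
  ultimately show ?thesis
    using that by (meson not_le)
qed

lemma expect_card_image_le_uniform:
  fixes u :: real
  assumes "finite I" "finite A" "\<And>a. a \<in> A \<Longrightarrow> 0 \<le> p a" "sum p A = card A * u" "mono Q"
  shows "expect_card_image I A p Q \<le> expect_card_image I A (\<lambda>_. u) Q"
  using assms(3,4)
proof (induction "card {a \<in> A. p a \<noteq> u}" arbitrary: p rule: less_induct)
  case less
  show ?case
  proof (cases "\<forall>a\<in>A. p a = u")
    case True
    then show ?thesis
      by (intro order_eq_refl expect_card_image_cong) simp
  next
    case False
    then obtain a where "a \<in> A" "p a \<noteq> u"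
      by blast
    then obtain i j where ij: "i \<in> A" "j \<in> A" "u < p i" "p j < u"
      using exists_above_and_below_mean[OF assms(2) less.prems(2)] by blast
    then have "i \<noteq> j"
      by auto
    \<comment> \<open>moving d from i to j puts i or j at the mean\<close>
    define d where "d = min (p i - u) (u - p j)"
    define p' where "p' = p(i := p i - d, j := p j + d)"
    have p'_ij: "p' i = p i - d" "p' j = p j + d" and p'_other: "\<And>b. b \<notin> {i, j} \<Longrightarrow> p' b = p b"
      using \<open>i \<noteq> j\<close> by (simp_all add: p'_def)
    have "0 \<le> d" "d \<le> p i - u"
      using ij by (simp_all add: d_def)
    have "expect_card_image I A p Q \<le> expect_card_image I A p' Q"
      unfolding p'_def
      by (rule expect_card_image_transfer_mono)
        (use assms(1,2,5) less.prems(1) ij \<open>i \<noteq> j\<close> \<open>0 \<le> d\<close> \<open>d \<le> p i - u\<close> in auto)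
    also have "\<dots> \<le> expect_card_image I A (\<lambda>_. u) Q"
    proof (rule less.hyps)
      show "0 \<le> p' b" if "b \<in> A" for b
        using less.prems(1) that ij p'_ij p'_other \<open>0 \<le> d\<close> \<open>d \<le> p i - u\<close>
        by (cases "b \<in> {i, j}") force+
      show "sum p' A = card A * u"
        unfolding p'_def sum_transfer_eq[OF assms(2) ij(1,2) \<open>i \<noteq> j\<close>] by (rule less.prems(2))
      have "p' i = u \<or> p' j = u"
        unfolding p'_ij d_def by linarith
      moreover have "{b \<in> A. p' b \<noteq> u} \<subseteq> {b \<in> A. p b \<noteq> u}"
        using ij p'_other by fastforce
      ultimately have "{b \<in> A. p' b \<noteq> u} \<subset> {b \<in> A. p b \<noteq> u}"
        using ij by fastforce
      then show "card {b \<in> A. p' b \<noteq> u} < card {b \<in> A. p b \<noteq> u}"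
        using assms(2) by (simp add: psubset_card_mono)
    qed
    finally show ?thesis .
  qed
qed

lemma prob_iid_samples_card_image:
  assumes "finite A" "set_pmf P \<subseteq> A"
  shows "measure_pmf.prob (iid_samples s P) {f. R (card (f ` {..<s}))}
       = expect_card_image {..<s} A (pmf P) (\<lambda>k. of_bool (R k))"
proof -
  let ?E = "{f. R (card (f ` {..<s}))}"
  have "set_pmf (iid_samples s P) \<subseteq> PiE {..<s} (\<lambda>_. A)"
    using set_Pi_pmf_subset'[of "{..<s}" undefined "\<lambda>_. P"] assms(2)
    by (auto simp: iid_samples_def PiE_dflt_def PiE_iff extensional_def)
  then have "measure_pmf.prob (iid_samples s P) ?E
      = (\<Sum>f\<in>PiE {..<s} (\<lambda>_. A). indicator ?E f * pmf (iid_samples s P) f)"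
    using integral_measure_pmf_real[of "PiE {..<s} (\<lambda>_. A)" "iid_samples s P" "indicator ?E"]
      assms(1) by (auto simp: finite_PiE)
  also have "\<dots> = expect_card_image {..<s} A (pmf P) (\<lambda>k. of_bool (R k))"
    unfolding expect_card_image_def
  proof (intro sum.cong refl)
    fix f assume "f \<in> PiE {..<s} (\<lambda>_. A)"
    then have "pmf (iid_samples s P) f = (\<Prod>l<s. pmf P (f l))"
      unfolding iid_samples_def by (intro pmf_Pi') (auto simp: PiE_iff extensional_def)
    then show "indicator ?E f * pmf (iid_samples s P) f
        = (\<Prod>l<s. pmf P (f l)) * of_bool (R (card (f ` {..<s})))"
      by simp
  qed
  finally show ?thesis .
qed

theorem lemma3p3:
  fixes n s1 :: nat and P :: "nat pmf" and t :: real
  assumes "n \<ge> 1" and "s1 \<ge> 1"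
    and "set_pmf P \<subseteq> {1..n}"
  shows "measure_pmf.prob (iid_samples s1 P)
           {f. unif_mass_of_support n s1 f \<ge> t}
         \<le> measure_pmf.prob (iid_samples s1 (pmf_of_set {1..n}))
           {f. unif_mass_of_support n s1 f \<ge> t}"
proof -
  define Q :: "nat \<Rightarrow> real" where "Q = (\<lambda>k. of_bool (t \<le> real k / real n))"
  have event: "{f. unif_mass_of_support n s1 f \<ge> t} = {f. t \<le> real (card (f ` {..<s1})) / real n}"
    by (simp add: unif_mass_of_support_def)
  have "mono Q"
  proof (rule monoI)
    fix k k' :: nat assume "k \<le> k'"
    then have "real k / real n \<le> real k' / real n"
      by (simp add: divide_right_mono)
    then show "Q k \<le> Q k'"
      by (auto simp: Q_def)
  qed
  have uniform: "set_pmf (pmf_of_set {1..n}) \<subseteq> {1..n}"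
    using assms(1) by simp
  have "measure_pmf.prob (iid_samples s1 P) {f. unif_mass_of_support n s1 f \<ge> t}
      = expect_card_image {..<s1} {1..n} (pmf P) Q"
    unfolding event Q_def by (rule prob_iid_samples_card_image[OF _ assms(3)]) simp
  also have "\<dots> \<le> expect_card_image {..<s1} {1..n} (\<lambda>_. 1 / real n) Q"
    using assms(1,3) \<open>mono Q\<close> by (intro expect_card_image_le_uniform) (simp_all add: sum_pmf_eq_1)
  also have "\<dots> = expect_card_image {..<s1} {1..n} (pmf (pmf_of_set {1..n})) Q"
    using assms(1) by (intro expect_card_image_cong) simp
  also have "\<dots> = measure_pmf.prob (iid_samples s1 (pmf_of_set {1..n}))
                     {f. unif_mass_of_support n s1 f \<ge> t}"
    unfolding event Q_def by (rule prob_iid_samples_card_image[OF _ uniform, symmetric]) simp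
  finally show ?thesis .
qed

end
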